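(* Let $U_0$, $T(s)$, $A$, $U_l$, $\varepsilon_0$, $u_0$, $F$, $\mathcal{F}$ be as in the context, satisfying (A1)–(A4). Then $u_0\in U_l$ for all nonnegative integers $l$.
   Context: $U_0$ is a real Banach space with norm $\|\cdot\|_0$, $\{T(s)\}_{s\in\mathbb{R}}$ a strongly continuous group of bounded linear operators on $U_0$ with generator $A$, $U_l:=D(A^l)=\{u\in U_0: T(\cdot)u\in C^l(\mathbb{R};U_0)\}$ with norm $\|u\|_l:=\sum_{k=0}^l\|A^ku\|_0$. $\varepsilon_0>0$, $u_0\in U_0$, $F:[-\varepsilon_0,\varepsilon_0]\times U_0\to U_0$ with $F(0,u_0)=0$, and $\mathcal{F}(\lambda,s,u):=T(s)F(\lambda,T(-s)u)$. Assumptions: (A1) for every $\lambda$, $(s,u)\mapsto\mathcal{F}(\lambda,s,u)$ is in $C^\infty(\mathbb{R}\times U_0;U_0)$, with partial derivatives $\partial_s^k\partial_u^j\mathcal{F}$; $\partial_u^jF(\lambda,u):=\partial_u^j\mathcal{F}(\lambda,0,u)$. (A2) for all $j,k,l\ge0$ and $u,u_1,\dots,u_j\in U_l$, $\lambda\mapsto\partial_s^k\partial_u^j\mathcal{F}(\lambda,0,u)(u_1,\dots,u_j)$ is in $C^l([-\varepsilon_0,\varepsilon_0];U_0)$; its $l$-th derivative is written $\partial_\lambda^l\partial_s^k\partial_u^j\mathcal{F}(\lambda,0,u)(u_1,\dots,u_j)$. (A3) for all $j,k,l\ge0$ there is $c_{jkl}>0$ with $\|\partial_\lambda^l\partial_s^k\partial_u^j\mathcal{F}(\lambda,0,u)(u_1,\dots,u_j)\|_0\le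 c_{jkl}\|u_1\|_l\cdots\|u_j\|_l$ for all $\lambda\in[-\varepsilon_0,\varepsilon_0]$, $u,u_i\in U_l$, $\|u-u_0\|_l\le1$. (A4) there is $c_0>0$ such that for all $\lambda\in[-\varepsilon_0,\varepsilon_0]$, $\partial_uF(\lambda,u_0)$ is Fredholm of index zero $U_0\to U_0$ and $\|\partial_uF(\lambda,u_0)u\|_0\ge c_0\|u\|_0$ for all $u\in U_0$. *)

theory Defs
  imports "HOL-Analysis.Analysis"
begin

definition sc_group :: "(real \<Rightarrow> 'a::banach \<Rightarrow> 'a) \<Rightarrow> bool" where
  "sc_group T \<longleftrightarrow> (\<forall>s. bounded_linear (T s)) \<and> T 0 = id \<and>
     (\<forall>s t. T (s + t) = T s \<circ> T t) \<and> (\<forall>u. continuous_on UNIV (\<lambda>s. T s u))"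

definition gen_dom :: "(real \<Rightarrow> 'a::banach \<Rightarrow> 'a) \<Rightarrow> 'a set" where
  "gen_dom T = {u. (\<lambda>s. T s u) differentiable (at 0)}"

definition gen :: "(real \<Rightarrow> 'a::banach \<Rightarrow> 'a) \<Rightarrow> 'a \<Rightarrow> 'a" where
  "gen T u = vector_derivative (\<lambda>s. T s u) (at 0)"

definition Udom :: "(real \<Rightarrow> 'a::banach \<Rightarrow> 'a) \<Rightarrow> nat \<Rightarrow> 'a set" where
  "Udom T l = {u. \<forall>k<l. (gen T ^^ k) u \<in> gen_dom T}"

definition lnorm :: "(real \<Rightarrow> 'a::banach \<Rightarrow> 'a) \<Rightarrow> nat \<Rightarrow> 'a \<Rightarrow> real" where
  "lnorm T l u = (\<Sum>k\<le>l. norm ((gen T ^^ k) u))"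

text \<open>A j-linear map is represented as a function on lists of length j.\<close>
definition bounded_multilinear :: "nat \<Rightarrow> ('x::real_normed_vector list \<Rightarrow> 'y::real_normed_vector) \<Rightarrow> bool" where
  "bounded_multilinear j M \<longleftrightarrow>
     (\<forall>hs i. length hs = j \<longrightarrow> i < j \<longrightarrow> linear (\<lambda>h. M (hs[i := h]))) \<and>
     (\<exists>C. \<forall>hs. length hs = j \<longrightarrow> norm (M hs) \<le> C * prod_list (map norm hs))"

definition mnorm :: "nat \<Rightarrow> ('x::real_normed_vector list \<Rightarrow> 'y::real_normed_vector) \<Rightarrow> real" where
  "mnorm j M = Sup {norm (M hs) | hs. length hs = j \<and> (\<forall>h\<in>set hs. norm h \<le> 1)}"

text \<open>D j x is the j-th Frechet derivative of f at x (a bounded j-linear map), and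
  D (j+1) x (h # hs) is the Frechet derivative of x \<mapsto> D j x in direction h, the
  remainder measured in the operator norm of j-linear maps.  A function having such a
  family of derivatives (on the whole space) is C^infinity.\<close>
definition higher_derivs :: "('x::real_normed_vector \<Rightarrow> 'y::real_normed_vector) \<Rightarrow>
    (nat \<Rightarrow> 'x \<Rightarrow> 'x list \<Rightarrow> 'y) \<Rightarrow> bool" where
  "higher_derivs f D \<longleftrightarrow> (\<forall>x. D 0 x [] = f x) \<and>
     (\<forall>j x. bounded_multilinear j (D j x)) \<and>
     (\<forall>j x. ((\<lambda>h. mnorm j (\<lambda>hs. D j (x + h) hs - D j x hs - D (Suc j) x (h # hs)) / norm h)
              \<longlongrightarrow> 0) (at 0))"

text \<open>Partial derivative d_s^k d_u^j of a map on real x U_0 at (s,u), in directions us.\<close>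
definition pderiv_su :: "(nat \<Rightarrow> real \<times> 'a \<Rightarrow> (real \<times> 'a) list \<Rightarrow> 'b) \<Rightarrow> nat \<Rightarrow> real \<Rightarrow> 'a::real_normed_vector \<Rightarrow> 'a list \<Rightarrow> 'b" where
  "pderiv_su D k s u us = D (k + length us) (s, u) (replicate k (1, 0) @ map (\<lambda>v. (0, v)) us)"

definition fredholm_index_zero :: "('a::real_normed_vector \<Rightarrow> 'a) \<Rightarrow> bool" where
  "fredholm_index_zero L \<longleftrightarrow> bounded_linear L \<and> closed (range L) \<and>
     (\<exists>K W. finite K \<and> independent K \<and> span K = {v. L v = 0} \<and>
            finite W \<and> independent W \<and> range L \<inter> span W = {0} \<and>
            {x + y | x y. x \<in> range L \<and> y \<in> span W} = UNIV \<and>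
            card K = card W)"

definition Cl_with :: "nat \<Rightarrow> real set \<Rightarrow> (nat \<Rightarrow> real \<Rightarrow> 'a::real_normed_vector) \<Rightarrow> bool" where
  "Cl_with l S G \<longleftrightarrow> (\<forall>m<l. \<forall>t\<in>S. (G m has_vector_derivative G (Suc m) t) (at t within S)) \<and>
     continuous_on S (G l)"

end

theory Submission
  imports Defs
begin

text \<open>Put \<open>\<Phi>(s, u) = T s (F 0 (T (-s) u))\<close>, so that \<open>\<Phi>(s, T s u0) = 0\<close> for all \<open>s\<close>, and let
  \<open>L = \<partial>\<^sub>u\<Phi>(0, u0)\<close>, which is bounded below and has closed range.  Differentiability of \<open>\<Phi>\<close>
  at \<open>(0, u0)\<close> gives \<open>L (T t u0 - u0) = - t \<partial>\<^sub>s\<Phi>(0, u0) + o(|t| + |T t u0 - u0|)\<close>, hence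
  \<open>T t u0 - u0 = O(t)\<close>, and inverting \<open>L\<close> on the difference quotients shows \<open>u0 \<in> D(A)\<close>.
  If \<open>u0 \<in> D(A^k)\<close>, differentiating \<open>\<Phi>(s, T s u0) = 0\<close> \<open>k\<close> times by the chain and product
  rules expresses \<open>\<partial>\<^sub>u\<Phi>(s, T s u0) (T s (A^k u0))\<close> through terms involving only
  \<open>T s (A^j u0)\<close> with \<open>j < k\<close>, which are differentiable in \<open>s\<close>; inverting \<open>L\<close> again gives
  \<open>A^k u0 \<in> D(A)\<close>.\<close>

section \<open>Bounded multilinear maps\<close>

lemma bounded_multilinear_linear:
  "bounded_multilinear m M \<Longrightarrow> length hs = m \<Longrightarrow> i < m \<Longrightarrow> linear (\<lambda>h. M (hs[i := h]))"
  by (simp add: bounded_multilinear_def)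

lemma bounded_multilinear_nonneg_bound:
  assumes "bounded_multilinear m M"
  obtains C where "C \<ge> 0" "\<And>hs. length hs = m \<Longrightarrow> norm (M hs) \<le> C * prod_list (map norm hs)"
proof -
  obtain C where C: "\<And>hs. length hs = m \<Longrightarrow> norm (M hs) \<le> C * prod_list (map norm hs)"
    using assms unfolding bounded_multilinear_def by blast
  have "norm (M hs) \<le> max C 0 * prod_list (map norm hs)" if "length hs = m" for hs
    using C[OF that] mult_right_mono[OF max.cobounded1 prod_list_nonneg, of "map norm hs" C 0]
    by fastforce
  then show ?thesis using that[of "max C 0"] by auto
qed

lemma bounded_multilinear_update_add:
  "bounded_multilinear m M \<Longrightarrow> length hs = m \<Longrightarrow> i < m \<Longrightarrow>
    M (hs[i := x + y]) = M (hs[i := x]) + M (hs[i := y])"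
  using linear_add[OF bounded_multilinear_linear] by blast

lemma bounded_multilinear_update_diff:
  "bounded_multilinear m M \<Longrightarrow> length hs = m \<Longrightarrow> i < m \<Longrightarrow>
    M (hs[i := x - y]) = M (hs[i := x]) - M (hs[i := y])"
  using linear_diff[OF bounded_multilinear_linear] by blast

lemma bounded_multilinear_update_scaleR:
  "bounded_multilinear m M \<Longrightarrow> length hs = m \<Longrightarrow> i < m \<Longrightarrow>
    M (hs[i := r *\<^sub>R x]) = r *\<^sub>R M (hs[i := x])"
  using linear_scale[OF bounded_multilinear_linear] by blast

lemma bounded_multilinear_update_0:
  "bounded_multilinear m M \<Longrightarrow> length hs = m \<Longrightarrow> i < m \<Longrightarrow> M (hs[i := 0]) = 0"
  using linear_0[OF bounded_multilinear_linear] by blast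

lemma bounded_multilinear_eq_0:
  assumes "bounded_multilinear m M" "length hs = m" "i < m" "hs ! i = 0"
  shows "M hs = 0"
  using bounded_multilinear_update_0[OF assms(1-3)] assms(4) by (metis list_update_id)

lemma map_upt_update:
  "i < m \<Longrightarrow> (map g [0..<m])[i := x] = map (\<lambda>j. if j = i then x else g j) [0..<m]"
  by (rule nth_equalityI) (auto simp: nth_list_update)

lemma bounded_multilinear_scaleR_entry:
  assumes "bounded_multilinear m M" "i < m"
  shows "M (map (\<lambda>j. if j = i then r *\<^sub>R x else g j) [0..<m]) =
    r *\<^sub>R M (map (\<lambda>j. if j = i then x else g j) [0..<m])"
  using bounded_multilinear_update_scaleR[OF assms(1) _ assms(2), of "map g [0..<m]"] assms(2)
  by (simp add: map_upt_update)

lemma bounded_multilinear_telescope: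
  assumes M: "bounded_multilinear m M"
  shows "M (map a [0..<m]) - M (map b [0..<m]) =
    (\<Sum>i<m. M (map (\<lambda>j. if j = i then a i - b i else if j < i then b j else a j) [0..<m]))"
proof -
  define mix where "mix i = map (\<lambda>j. if j < i then b j else a j) [0..<m]" for i
  have "M (mix i) - M (mix (Suc i)) =
      M (map (\<lambda>j. if j = i then a i - b i else if j < i then b j else a j) [0..<m])"
    if i: "i < m" for i
  proof -
    have mix: "mix i = (mix i)[i := a i]" "mix (Suc i) = (mix i)[i := b i]"
      using i by (auto simp: mix_def map_upt_update less_Suc_eq intro!: map_cong)
    have "M ((mix i)[i := a i - b i]) = M ((mix i)[i := a i]) - M ((mix i)[i := b i])"
      by (rule bounded_multilinear_update_diff[OF M _ i]) (simp add: mix_def)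
    then show ?thesis using i by (simp only: mix[symmetric]) (simp add: mix_def map_upt_update)
  qed
  then have "(\<Sum>i<m. M (mix i) - M (mix (Suc i))) =
      (\<Sum>i<m. M (map (\<lambda>j. if j = i then a i - b i else if j < i then b j else a j) [0..<m]))"
    by simp
  moreover have "(\<Sum>i<m. M (mix i) - M (mix (Suc i))) = M (mix 0) - M (mix m)"
    by (rule sum_lessThan_telescope')
  moreover have "mix 0 = map a [0..<m]" "mix m = map b [0..<m]"
    unfolding mix_def by auto
  ultimately show ?thesis by simp
qed

lemma prod_list_map_upt: "prod_list (map g [0..<m]) = (\<Prod>j<m. g j)"
  by (induction m) (simp_all add: lessThan_Suc mult.commute)

lemma sum_list_map_upt: "sum_list (map g [0..<m]) = (\<Sum>j<m. g j)"
  by (induction m) (simp_all add: lessThan_Suc add.commute)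

lemma sum_list_concat: "sum_list (concat xss) = sum_list (map sum_list xss)"
  by (induction xss) auto

lemma tendsto_bounded_multilinear:
  assumes M: "bounded_multilinear m M"
    and f: "\<And>i. i < m \<Longrightarrow> ((\<lambda>t. f t i) \<longlongrightarrow> L i) F"
  shows "((\<lambda>t. M (map (f t) [0..<m])) \<longlongrightarrow> M (map L [0..<m])) F"
proof -
  obtain C where C: "C \<ge> 0" "\<And>hs. length hs = m \<Longrightarrow> norm (M hs) \<le> C * prod_list (map norm hs)"
    using bounded_multilinear_nonneg_bound[OF M] by blast
  define e where "e t i j = (if j = i then f t i - L i else if j < i then L j else f t j)" for t i j
  have "((\<lambda>t. M (map (e t i) [0..<m])) \<longlongrightarrow> 0) F" if i: "i < m" for i
  proof (rule Lim_null_comparison)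
    show "\<forall>\<^sub>F t in F. norm (M (map (e t i) [0..<m])) \<le> C * (\<Prod>j<m. norm (e t i j))"
      using C(2)[of "map (e t i) [0..<m]" for t] by (simp add: prod_list_map_upt o_def)
    have "((\<lambda>t. norm (e t i j)) \<longlongrightarrow> norm (if j = i then 0 else L j)) F" if "j < m" for j
    proof -
      have "((\<lambda>t. e t i j) \<longlongrightarrow> (if j = i then 0 else L j)) F"
        using f[OF i] f[OF that] by (cases "j < i") (auto simp: e_def Lim_null[symmetric])
      then show ?thesis by (rule tendsto_norm)
    qed
    then have "((\<lambda>t. C * (\<Prod>j<m. norm (e t i j))) \<longlongrightarrow>
        C * (\<Prod>j<m. norm (if j = i then 0 else L j))) F"
      by (intro tendsto_mult tendsto_const tendsto_prod) auto
    moreover have "(\<Prod>j<m. norm (if j = i then 0 else L j)) = 0"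
      using i by (intro prod_zero) auto
    ultimately show "((\<lambda>t. C * (\<Prod>j<m. norm (e t i j))) \<longlongrightarrow> 0) F" by simp
  qed
  then have "((\<lambda>t. \<Sum>i<m. M (map (e t i) [0..<m])) \<longlongrightarrow> 0) F"
    by (intro tendsto_null_sum) auto
  moreover have "M (map (f t) [0..<m]) - M (map L [0..<m]) = (\<Sum>i<m. M (map (e t i) [0..<m]))" for t
    unfolding e_def by (rule bounded_multilinear_telescope[OF M])
  ultimately have "((\<lambda>t. M (map (f t) [0..<m]) - M (map L [0..<m])) \<longlongrightarrow> 0) F"
    by simp
  then show ?thesis by (simp add: Lim_null[symmetric])
qed

lemma bounded_multilinear_scaleR_entries:
  assumes M: "bounded_multilinear m M"
  shows "M (map (\<lambda>i. r i *\<^sub>R h i) [0..<m]) = (\<Prod>i<m. r i) *\<^sub>R M (map h [0..<m])"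
proof -
  have "n \<le> m \<Longrightarrow> M (map (\<lambda>i. if i < n then r i *\<^sub>R h i else h i) [0..<m]) =
      (\<Prod>i<n. r i) *\<^sub>R M (map h [0..<m])" for n
  proof (induction n)
    case (Suc n)
    have "map (\<lambda>i. if i < Suc n then r i *\<^sub>R h i else h i) [0..<m] =
        (map (\<lambda>i. if i < n then r i *\<^sub>R h i else h i) [0..<m])[n := r n *\<^sub>R h n]"
      "(map (\<lambda>i. if i < n then r i *\<^sub>R h i else h i) [0..<m])[n := h n] =
        map (\<lambda>i. if i < n then r i *\<^sub>R h i else h i) [0..<m]"
      using Suc.prems by (auto simp: map_upt_update less_Suc_eq intro!: map_cong)
    with bounded_multilinear_update_scaleR[OF M _ Suc_le_lessD[OF Suc.prems]] Suc
    show ?case by (simp add: lessThan_Suc mult.commute)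
  qed simp
  from this[of m] have "M (map (\<lambda>i. if i < m then r i *\<^sub>R h i else h i) [0..<m]) =
      (\<Prod>i<m. r i) *\<^sub>R M (map h [0..<m])"
    by simp
  moreover have "map (\<lambda>i. if i < m then r i *\<^sub>R h i else h i) [0..<m] =
      map (\<lambda>i. r i *\<^sub>R h i) [0..<m]"
    by (rule map_cong) auto
  ultimately show ?thesis by simp
qed

lemma norm_le_mnorm:
  assumes M: "bounded_multilinear m M" and l: "length hs = m"
  shows "norm (M hs) \<le> mnorm m M * prod_list (map norm hs)"
proof (cases "\<exists>i<m. hs ! i = 0")
  case True
  then obtain i where i: "i < m" "hs ! i = 0" by blast
  then have "0 \<in> set (map norm hs)"
    using l by (metis length_map nth_map nth_mem norm_zero)
  then have "prod_list (map norm hs) = 0"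
    by (simp add: prod_list_zero_iff)
  then show ?thesis using bounded_multilinear_eq_0[OF M l i] by simp
next
  case False
  obtain C where C: "C \<ge> 0" "\<And>hs. length hs = m \<Longrightarrow> norm (M hs) \<le> C * prod_list (map norm hs)"
    using bounded_multilinear_nonneg_bound[OF M] by blast
  define u where "u i = (1 / norm (hs ! i)) *\<^sub>R (hs ! i)" for i
  have nu: "norm (u j) = 1" if "j < m" for j
    using False that by (simp add: u_def)
  have hs: "hs = map (\<lambda>i. norm (hs ! i) *\<^sub>R u i) [0..<m]"
    using False l by (auto simp: u_def intro!: nth_equalityI)
  have "norm (M (map u [0..<m])) \<le> mnorm m M"
    unfolding mnorm_def
  proof (rule cSup_upper)
    show "norm (M (map u [0..<m])) \<in> {norm (M hs) |hs. length hs = m \<and> (\<forall>h\<in>set hs. norm h \<le> 1)}"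
      using nu by (intro CollectI exI[of _ "map u [0..<m]"]) auto
    have "C * prod_list (map norm hs') \<le> C" if "\<forall>h\<in>set hs'. norm h \<le> 1" for hs' :: "'a list"
      using that C(1) by (intro mult_left_le prod_list_nonneg) (induction hs', auto intro!: mult_le_one prod_list_nonneg)
    then show "bdd_above {norm (M hs) |hs. length hs = m \<and> (\<forall>h\<in>set hs. norm h \<le> 1)}"
      using C(2) by (intro bdd_aboveI[where M=C]) (blast intro: order_trans)
  qed
  moreover have "M hs = (\<Prod>i<m. norm (hs ! i)) *\<^sub>R M (map u [0..<m])"
    by (subst hs) (rule bounded_multilinear_scaleR_entries[OF M])
  moreover have "prod_list (map norm hs) = (\<Prod>i<m. norm (hs ! i))"
    by (subst hs) (auto simp: prod_list_map_upt nu intro!: prod.cong)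
  ultimately show ?thesis
    by (simp add: mult.commute[of "prod _ _"] mult_right_mono prod_nonneg)
qed

section \<open>Vector derivatives as limits of difference quotients\<close>

lemma has_vector_derivative_iff_difference_quotient:
  fixes f :: "real \<Rightarrow> 'b::real_normed_vector"
  shows "(f has_vector_derivative f') (at s) \<longleftrightarrow>
    ((\<lambda>h. (1/h) *\<^sub>R (f (s + h) - f s)) \<longlongrightarrow> f') (at 0)"
proof -
  have "(f has_vector_derivative f') (at s) \<longleftrightarrow>
      ((\<lambda>h. norm (f (s + h) - f s - h *\<^sub>R f') / norm h) \<longlongrightarrow> 0) (at 0)"
    unfolding has_vector_derivative_def has_derivative_at by (simp add: bounded_linear_scaleR_left)
  also have "\<dots> \<longleftrightarrow> ((\<lambda>h. norm ((1/h) *\<^sub>R (f (s + h) - f s) - f')) \<longlongrightarrow> 0) (at 0)"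
  proof (rule tendsto_cong)
    have "norm (f (s + h) - f s - h *\<^sub>R f') / norm h = norm ((1/h) *\<^sub>R (f (s + h) - f s) - f')"
      if "h \<noteq> 0" for h :: real
    proof -
      have "(1/h) *\<^sub>R (f (s + h) - f s) - f' = (1/h) *\<^sub>R (f (s + h) - f s - h *\<^sub>R f')"
        using that by (simp add: algebra_simps)
      then show ?thesis by (simp add: divide_inverse_commute)
    qed
    then show "\<forall>\<^sub>F h in at 0. norm (f (s + h) - f s - h *\<^sub>R f') / norm h =
        norm ((1/h) *\<^sub>R (f (s + h) - f s) - f')"
      by (auto simp: eventually_at_filter)
  qed
  also have "\<dots> \<longleftrightarrow> ((\<lambda>h. (1/h) *\<^sub>R (f (s + h) - f s)) \<longlongrightarrow> f') (at 0)"
    by (simp add: tendsto_norm_zero_iff Lim_null[symmetric])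
  finally show ?thesis .
qed

lemma has_vector_derivative_tendsto_shift:
  "(g has_vector_derivative g') (at s) \<Longrightarrow> ((\<lambda>t. g (s + t)) \<longlongrightarrow> g s) (at 0)"
  by (rule LIM_offset_zero) (simp add: has_vector_derivative_continuous isCont_def[symmetric])

lemma has_vector_derivative_sum_list:
  "(\<And>l. l \<in> set Q \<Longrightarrow> (f l has_vector_derivative f' l) (at s)) \<Longrightarrow>
    ((\<lambda>s. sum_list (map (\<lambda>l. f l s) Q)) has_vector_derivative sum_list (map f' Q)) (at s)"
  by (induction Q) (auto intro!: has_vector_derivative_add)

lemma has_vector_derivative_zero_unique:
  fixes f :: "real \<Rightarrow> 'c::real_normed_vector"
  assumes "(f has_vector_derivative f') (at s)" "\<And>s. f s = 0"
  shows "f' = 0"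
  using assms vector_derivative_unique_at has_vector_derivative_const by (metis ext)

lemma has_vector_derivative_bounded_multilinear:
  assumes M: "bounded_multilinear m M"
    and g: "\<And>i. i < m \<Longrightarrow> (g i has_vector_derivative g' i) (at s)"
  shows "((\<lambda>s. M (map (\<lambda>i. g i s) [0..<m])) has_vector_derivative
          (\<Sum>i<m. M ((map (\<lambda>i. g i s) [0..<m])[i := g' i]))) (at s)"
  unfolding has_vector_derivative_iff_difference_quotient
proof -
  define E where "E t i j = (if j = i then (1/t) *\<^sub>R (g i (s + t) - g i s)
      else if j < i then g j s else g j (s + t))" for t i j
  have "(1/t) *\<^sub>R (M (map (\<lambda>i. g i (s + t)) [0..<m]) - M (map (\<lambda>i. g i s) [0..<m])) =
      (\<Sum>i<m. M (map (E t i) [0..<m]))" for t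
    unfolding bounded_multilinear_telescope[OF M] scaleR_sum_right E_def
    by (rule sum.cong[OF refl]) (simp add: bounded_multilinear_scaleR_entry[OF M])
  moreover have "((\<lambda>t. M (map (E t i) [0..<m])) \<longlongrightarrow>
      M ((map (\<lambda>i. g i s) [0..<m])[i := g' i])) (at 0)" if i: "i < m" for i
    unfolding map_upt_update[OF i]
  proof (rule tendsto_bounded_multilinear[OF M])
    fix j assume j: "j < m"
    then show "((\<lambda>t. E t i j) \<longlongrightarrow> (if j = i then g' i else g j s)) (at 0)"
      using g i has_vector_derivative_tendsto_shift[OF g[OF j]] by (cases "j < i") (auto simp: E_def has_vector_derivative_iff_difference_quotient
          has_vector_derivative_tendsto_shift)
  qed
  ultimately show "((\<lambda>h. (1 / h) *\<^sub>R (M (map (\<lambda>i. g i (s + h)) [0..<m]) -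
      M (map (\<lambda>i. g i s) [0..<m]))) \<longlongrightarrow> (\<Sum>i<m. M ((map (\<lambda>i. g i s) [0..<m])[i := g' i]))) (at 0)"
    by (simp only:) (rule tendsto_sum, simp)
qed

section \<open>Higher Frechet derivatives\<close>

context
  fixes \<Phi> :: "'x::real_normed_vector \<Rightarrow> 'y::real_normed_vector"
    and D :: "nat \<Rightarrow> 'x \<Rightarrow> 'x list \<Rightarrow> 'y"
  assumes higher_derivs: "higher_derivs \<Phi> D"
begin

lemma higher_derivs_multilinear: "bounded_multilinear j (D j x)"
  using higher_derivs by (simp add: higher_derivs_def)

lemma higher_derivs_0: "D 0 x [] = \<Phi> x"
  using higher_derivs by (simp add: higher_derivs_def)

lemma higher_derivs_remainder:
  "((\<lambda>h. mnorm j (\<lambda>hs. D j (x + h) hs - D j x hs - D (Suc j) x (h # hs)) / norm h) \<longlongrightarrow> 0) (at 0)"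
  using higher_derivs by (simp add: higher_derivs_def)

lemma higher_derivs_remainder_multilinear:
  "bounded_multilinear m (\<lambda>hs. D m (x + h) hs - D m x hs - D (Suc m) x (h # hs))"
proof -
  have M1: "bounded_multilinear m (D m (x + h))" and M2: "bounded_multilinear m (D m x)"
    and M3: "bounded_multilinear (Suc m) (D (Suc m) x)"
    by (rule higher_derivs_multilinear)+
  obtain C1 where C1: "\<And>hs. length hs = m \<Longrightarrow> norm (D m (x + h) hs) \<le> C1 * prod_list (map norm hs)"
    using bounded_multilinear_nonneg_bound[OF M1] by blast
  obtain C2 where C2: "\<And>hs. length hs = m \<Longrightarrow> norm (D m x hs) \<le> C2 * prod_list (map norm hs)"
    using bounded_multilinear_nonneg_bound[OF M2] by blast
  obtain C3 where C3: "\<And>hs. length hs = Suc m \<Longrightarrow> norm (D (Suc m) x hs) \<le> C3 * prod_list (map norm hs)"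
    using bounded_multilinear_nonneg_bound[OF M3] by blast
  show ?thesis unfolding bounded_multilinear_def
  proof (intro conjI allI impI exI)
    fix hs :: "'x list" and i assume l: "length hs = m" and i: "i < m"
    have "linear (\<lambda>k. D (Suc m) x ((h # hs)[Suc i := k]))"
      using bounded_multilinear_linear[OF M3, of "h # hs" "Suc i"] l i by simp
    then show "linear (\<lambda>k. D m (x + h) (hs[i := k]) - D m x (hs[i := k]) - D (Suc m) x (h # hs[i := k]))"
      using bounded_multilinear_linear[OF M1 l i] bounded_multilinear_linear[OF M2 l i]
      by (auto intro!: linear_compose_sub)
  next
    fix hs :: "'x list" assume l: "length hs = m"
    have "norm (D m (x + h) hs - D m x hs - D (Suc m) x (h # hs)) \<le>
        norm (D m (x + h) hs) + norm (D m x hs) + norm (D (Suc m) x (h # hs))"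
      using norm_triangle_ineq4[of "D m (x + h) hs - D m x hs" "D (Suc m) x (h # hs)"]
        norm_triangle_ineq4[of "D m (x + h) hs" "D m x hs"] by linarith
    also have "\<dots> \<le> C1 * prod_list (map norm hs) + C2 * prod_list (map norm hs) +
        C3 * (norm h * prod_list (map norm hs))"
      using C1[OF l] C2[OF l] C3[of "h # hs"] l by (intro add_mono) auto
    finally show "norm (D m (x + h) hs - D m x hs - D (Suc m) x (h # hs)) \<le>
        (C1 + C2 + C3 * norm h) * prod_list (map norm hs)"
      by (simp add: algebra_simps)
  qed
qed

lemma higher_derivs_remainder_bound:
  assumes "length hs = m"
  shows "norm (D m (x + h) hs - D m x hs - D (Suc m) x (h # hs)) \<le>
    (mnorm m (\<lambda>hs. D m (x + h) hs - D m x hs - D (Suc m) x (h # hs)) / norm h) *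
      norm h * prod_list (map norm hs)"
proof (cases "h = 0")
  case True
  have "D (Suc m) x (0 # hs) = 0"
    by (rule bounded_multilinear_eq_0[OF higher_derivs_multilinear]) (use assms in auto)
  then show ?thesis using True by simp
next
  case False
  then show ?thesis
    using norm_le_mnorm[OF higher_derivs_remainder_multilinear assms] by simp
qed

lemma higher_derivs_has_derivative: "(\<Phi> has_derivative (\<lambda>h. D 1 x [h])) (at x)"
  unfolding has_derivative_at
proof
  have "linear (\<lambda>h. D 1 x ([0][0 := h]))"
    by (rule bounded_multilinear_linear[OF higher_derivs_multilinear]) auto
  then have lin: "linear (\<lambda>h. D 1 x [h])" by simp
  obtain C where C: "\<And>hs. length hs = 1 \<Longrightarrow> norm (D 1 x hs) \<le> C * prod_list (map norm hs)"
    using bounded_multilinear_nonneg_bound[OF higher_derivs_multilinear] by blast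
  have "norm (D 1 x [h]) \<le> norm h * C" for h using C[of "[h]"] by (simp add: mult.commute)
  then show "bounded_linear (\<lambda>h. D 1 x [h])"
    using lin by (auto simp: bounded_linear_def bounded_linear_axioms_def)
  have "mnorm 0 M = norm (M [])" for M :: "'x list \<Rightarrow> 'y"
  proof -
    have "{norm (M hs) |hs. length hs = 0 \<and> (\<forall>h\<in>set hs. norm h \<le> 1)} = {norm (M [])}" by auto
    then show ?thesis by (simp add: mnorm_def)
  qed
  then show "((\<lambda>h. norm (\<Phi> (x + h) - \<Phi> x - D 1 x [h]) / norm h) \<longlongrightarrow> 0) (at 0)"
    using higher_derivs_remainder[of 0 x] by (simp add: higher_derivs_0)
qed

text \<open>The derivative of \<open>D m\<close> is \<open>D (m+1)\<close> in operator norm, so difference quotients of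
  \<open>D m\<close> along a differentiable curve converge even when the arguments move as well.\<close>

lemma tendsto_higher_derivs_difference_quotient:
  assumes c: "(c has_vector_derivative c') (at s)"
    and f: "\<And>i. i < m \<Longrightarrow> ((\<lambda>t. f t i) \<longlongrightarrow> L i) (at 0)"
  shows "((\<lambda>t. (1/t) *\<^sub>R (D m (c (s + t)) (map (f t) [0..<m]) - D m (c s) (map (f t) [0..<m])))
          \<longlongrightarrow> D (Suc m) (c s) (c' # map L [0..<m])) (at 0)"
proof -
  define x where "x = c s"
  define \<delta> where "\<delta> t = c (s + t) - c s" for t
  define N where "N h hs = D m (x + h) hs - D m x hs - D (Suc m) x (h # hs)" for h hs
  define \<rho> where "\<rho> h = mnorm m (N h) / norm h" for h
  have M: "bounded_multilinear (Suc m) (D (Suc m) x)" by (rule higher_derivs_multilinear)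
  have "(\<rho> \<longlongrightarrow> 0) (at 0)"
    unfolding \<rho>_def N_def by (rule higher_derivs_remainder)
  then have \<rho>: "isCont \<rho> 0" by (simp add: isCont_def \<rho>_def)
  have \<delta>: "(\<delta> \<longlongrightarrow> 0) (at 0)"
    using tendsto_diff[OF has_vector_derivative_tendsto_shift[OF c] tendsto_const[of "c s"]]
    by (simp add: \<delta>_def[abs_def])
  have \<rho>\<delta>: "((\<lambda>t. \<rho> (\<delta> t)) \<longlongrightarrow> 0) (at 0)"
    using isCont_tendsto_compose[OF \<rho> \<delta>] by (simp add: \<rho>_def)
  have dq: "((\<lambda>t. (1/t) *\<^sub>R \<delta> t) \<longlongrightarrow> c') (at 0)"
    using c unfolding has_vector_derivative_iff_difference_quotient \<delta>_def .
  have split: "(1/t) *\<^sub>R (D m (c (s + t)) (map (f t) [0..<m]) - D m (c s) (map (f t) [0..<m])) =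
      (1/t) *\<^sub>R N (\<delta> t) (map (f t) [0..<m]) + D (Suc m) x (((1/t) *\<^sub>R \<delta> t) # map (f t) [0..<m])" for t
  proof -
    have "D (Suc m) x (((1/t) *\<^sub>R \<delta> t) # map (f t) [0..<m]) =
        (1/t) *\<^sub>R D (Suc m) x (\<delta> t # map (f t) [0..<m])"
      using bounded_multilinear_update_scaleR[OF M, of "\<delta> t # map (f t) [0..<m]" 0] by simp
    moreover have "c (s + t) = x + \<delta> t" by (simp add: x_def \<delta>_def)
    ultimately show ?thesis by (simp add: N_def x_def algebra_simps)
  qed
  have remainder: "((\<lambda>t. (1/t) *\<^sub>R N (\<delta> t) (map (f t) [0..<m])) \<longlongrightarrow> 0) (at 0)"
  proof (rule Lim_null_comparison)
    have "norm ((1/t) *\<^sub>R N (\<delta> t) (map (f t) [0..<m])) \<le>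
        \<bar>1/t\<bar> * (\<rho> (\<delta> t) * norm (\<delta> t) * prod_list (map norm (map (f t) [0..<m])))" for t
      unfolding \<rho>_def N_def x_def
      by (simp only: norm_scaleR, rule mult_left_mono[OF higher_derivs_remainder_bound]) auto
    then show "\<forall>\<^sub>F t in at 0. norm ((1/t) *\<^sub>R N (\<delta> t) (map (f t) [0..<m])) \<le>
        \<rho> (\<delta> t) * norm ((1/t) *\<^sub>R \<delta> t) * (\<Prod>j<m. norm (f t j))"
      by (simp add: prod_list_map_upt o_def mult_ac)
    have "((\<lambda>t. \<rho> (\<delta> t) * norm ((1/t) *\<^sub>R \<delta> t) * (\<Prod>j<m. norm (f t j))) \<longlongrightarrow>
        0 * norm c' * (\<Prod>j<m. norm (L j))) (at 0)"
      by (intro tendsto_mult tendsto_norm tendsto_prod \<rho>\<delta> dq f) auto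
    then show "((\<lambda>t. \<rho> (\<delta> t) * norm ((1/t) *\<^sub>R \<delta> t) * (\<Prod>j<m. norm (f t j))) \<longlongrightarrow> 0) (at 0)"
      by simp
  qed
  moreover have main: "((\<lambda>t. D (Suc m) x (((1/t) *\<^sub>R \<delta> t) # map (f t) [0..<m])) \<longlongrightarrow>
      D (Suc m) x (c' # map L [0..<m])) (at 0)"
  proof -
    define f' where "f' t j = (if j = 0 then (1/t) *\<^sub>R \<delta> t else f t (j - 1))" for t j
    define L' where "L' j = (if j = 0 then c' else L (j - 1))" for j
    have "map (f' t) [0..<Suc m] = ((1/t) *\<^sub>R \<delta> t) # map (f t) [0..<m]" for t
      by (simp only: map_upt_Suc) (simp add: f'_def)
    moreover have "map L' [0..<Suc m] = c' # map L [0..<m]"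
      by (simp only: map_upt_Suc) (simp add: L'_def)
    moreover have "((\<lambda>t. f' t j) \<longlongrightarrow> L' j) (at 0)" if "j < Suc m" for j
      using dq f[of "j - 1"] that by (cases j) (auto simp: f'_def L'_def)
    ultimately show ?thesis
      using tendsto_bounded_multilinear[OF M, of f' L'] by simp
  qed
  show ?thesis unfolding split x_def using tendsto_add[OF remainder main] by (simp add: x_def)
qed

lemma higher_derivs_chain_rule:
  assumes c: "(c has_vector_derivative c') (at s)"
    and g: "\<And>i. i < m \<Longrightarrow> (g i has_vector_derivative g' i) (at s)"
  shows "((\<lambda>s. D m (c s) (map (\<lambda>i. g i s) [0..<m])) has_vector_derivative
           D (Suc m) (c s) (c' # map (\<lambda>i. g i s) [0..<m]) +
           (\<Sum>i<m. D m (c s) ((map (\<lambda>i. g i s) [0..<m])[i := g' i]))) (at s)"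
  unfolding has_vector_derivative_iff_difference_quotient
proof -
  have A: "((\<lambda>t. (1/t) *\<^sub>R (D m (c (s + t)) (map (\<lambda>i. g i (s + t)) [0..<m]) -
        D m (c s) (map (\<lambda>i. g i (s + t)) [0..<m])))
      \<longlongrightarrow> D (Suc m) (c s) (c' # map (\<lambda>i. g i s) [0..<m])) (at 0)"
    using tendsto_higher_derivs_difference_quotient[OF c, of m "\<lambda>t i. g i (s + t)" "\<lambda>i. g i s"]
      g has_vector_derivative_tendsto_shift by blast
  moreover have B: "((\<lambda>t. (1/t) *\<^sub>R (D m (c s) (map (\<lambda>i. g i (s + t)) [0..<m]) -
        D m (c s) (map (\<lambda>i. g i s) [0..<m])))
      \<longlongrightarrow> (\<Sum>i<m. D m (c s) ((map (\<lambda>i. g i s) [0..<m])[i := g' i]))) (at 0)"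
    using has_vector_derivative_bounded_multilinear[OF higher_derivs_multilinear g]
    unfolding has_vector_derivative_iff_difference_quotient by simp
  show "((\<lambda>h. (1 / h) *\<^sub>R (D m (c (s + h)) (map (\<lambda>i. g i (s + h)) [0..<m]) -
      D m (c s) (map (\<lambda>i. g i s) [0..<m]))) \<longlongrightarrow> D (Suc m) (c s) (c' # map (\<lambda>i. g i s) [0..<m]) +
      (\<Sum>i<m. D m (c s) ((map (\<lambda>i. g i s) [0..<m])[i := g' i]))) (at 0)"
    using tendsto_add[OF A B] by (simp add: algebra_simps)
qed

end

section \<open>Differentiability from an injective derivative with closed range\<close>

lemma differentiable_at_0_of_bounded_below:
  fixes L :: "'a::real_normed_vector \<Rightarrow> 'b::real_normed_vector"
  assumes lin: "linear L" and c0: "c0 > 0" and below: "\<And>v. c0 * norm v \<le> norm (L v)"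
    and closed: "closed (range L)"
    and lim: "((\<lambda>t. L ((1/t) *\<^sub>R (x t - x 0))) \<longlongrightarrow> q) (at 0)"
  shows "x differentiable (at 0)"
proof -
  have "q \<in> range L"
    by (rule Lim_in_closed_set[OF closed _ _ lim]) (auto simp: trivial_limit_at)
  then obtain p where p: "q = L p" by blast
  have "((\<lambda>t. (1/t) *\<^sub>R (x t - x 0) - p) \<longlongrightarrow> 0) (at 0)"
  proof (rule Lim_null_comparison)
    have "c0 * norm ((1/t) *\<^sub>R (x t - x 0) - p) \<le> norm (L ((1/t) *\<^sub>R (x t - x 0)) - q)" for t
      using below[of "(1/t) *\<^sub>R (x t - x 0) - p"] by (simp add: p linear_diff[OF lin])
    then show "\<forall>\<^sub>F t in at 0. norm ((1/t) *\<^sub>R (x t - x 0) - p) \<le>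
        norm (L ((1/t) *\<^sub>R (x t - x 0)) - q) / c0"
      using c0 by (simp add: field_simps)
    have "((\<lambda>t. norm (L ((1/t) *\<^sub>R (x t - x 0)) - q)) \<longlongrightarrow> 0) (at 0)"
      using lim by (simp add: tendsto_norm_zero_iff Lim_null[symmetric])
    then show "((\<lambda>t. norm (L ((1/t) *\<^sub>R (x t - x 0)) - q) / c0) \<longlongrightarrow> 0) (at 0)"
      using tendsto_divide[OF _ tendsto_const[of c0]] c0 by fastforce
  qed
  then have "(x has_vector_derivative p) (at 0)"
    by (simp add: has_vector_derivative_iff_difference_quotient Lim_null[symmetric])
  then show ?thesis by (rule differentiableI_vector)
qed

lemma absorb_small_coefficient:
  fixes c \<rho> t n a X :: real
  assumes "c > 0" "0 \<le> \<rho>" "\<rho> < c/2" "t > 0" "0 \<le> n"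
    and "c * n \<le> X + t * a" "X \<le> \<rho> * (t + n)"
  shows "X \<le> \<rho> * t * (2 + 2 * a / c)"
proof -
  have "c * n \<le> (c/2) * (t + n) + t * a"
    using assms mult_right_mono[of \<rho> "c/2" "t + n"] by linarith
  then have "n \<le> t + 2 * t * a / c"
    using assms(1) by (simp add: field_simps)
  then have "\<rho> * (t + n) \<le> \<rho> * (t + (t + 2 * t * a / c))"
    using assms(2) by (intro mult_left_mono) auto
  then show ?thesis using assms(7) by (simp add: algebra_simps)
qed

text \<open>The estimate \<open>\<Phi>'(t, x t - x 0) = o(|t| + |x t - x 0|)\<close> and the lower bound on
  \<open>\<Phi>'(0, \<cdot>)\<close> first give \<open>x t - x 0 = O(t)\<close>, so that \<open>\<Phi>'(0, (x t - x 0) / t)\<close> converges.\<close>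

lemma differentiable_at_0_of_level_curve:
  fixes \<Phi> :: "real \<times> 'a::real_normed_vector \<Rightarrow> 'b::real_normed_vector"
  assumes deriv: "(\<Phi> has_derivative \<Phi>') (at (0, x 0))"
    and c0: "c0 > 0" and below: "\<And>v. c0 * norm v \<le> norm (\<Phi>' (0, v))"
    and closed: "closed (range (\<lambda>v. \<Phi>' (0, v)))"
    and cont: "(x \<longlongrightarrow> x 0) (at 0)"
    and level: "\<And>t. \<Phi> (t, x t) = \<Phi> (0, x 0)"
  shows "x differentiable (at 0)"
proof -
  define L where "L v = \<Phi>' (0, v)" for v
  define a where "a = \<Phi>' (1, 0)"
  define w where "w t = x t - x 0" for t
  define \<rho> where "\<rho> k = norm (\<Phi> ((0, x 0) + k) - \<Phi> (0, x 0) - \<Phi>' k) / norm k" for k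
  have bl: "bounded_linear \<Phi>'" and "(\<rho> \<longlongrightarrow> 0) (at 0)"
    using deriv unfolding has_derivative_at \<rho>_def[abs_def] by auto
  then have \<rho>: "isCont \<rho> 0" by (simp add: isCont_def \<rho>_def)
  have lin: "linear L"
    using bounded_linear_compose[OF bl bounded_linear_Pair[OF bounded_linear_zero bounded_linear_ident]]
    unfolding L_def by (rule bounded_linear.linear)
  have split: "\<Phi>' (t, w t) = t *\<^sub>R a + L (w t)" for t
    using linear_add[OF bounded_linear.linear[OF bl], of "t *\<^sub>R (1, 0)" "(0, w t)"]
      linear_scale[OF bounded_linear.linear[OF bl], of t "(1, 0)"]
    by (simp add: a_def L_def)
  have "((\<lambda>t. (t, w t)) \<longlongrightarrow> 0) (at 0)"
    using cont by (auto simp: w_def zero_prod_def Lim_null[symmetric] intro!: tendsto_Pair tendsto_ident_at)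
  moreover have "\<rho> 0 = 0" by (simp add: \<rho>_def)
  ultimately have \<rho>w: "((\<lambda>t. \<rho> (t, w t)) \<longlongrightarrow> 0) (at 0)"
    using isCont_tendsto_compose[OF \<rho>] by metis
  have remainder: "norm (\<Phi>' (t, w t)) \<le> \<rho> (t, w t) * (\<bar>t\<bar> + norm (w t))" for t
  proof (cases "(t, w t) = 0")
    case True
    then show ?thesis using linear_0[OF bounded_linear.linear[OF bl]] by (simp add: \<rho>_def)
  next
    case False
    have "\<Phi> ((0, x 0) + (t, w t)) = \<Phi> (0, x 0)" using level[of t] by (simp add: w_def)
    then have "norm (\<Phi>' (t, w t)) = \<rho> (t, w t) * norm (t, w t)"
      using False by (simp add: \<rho>_def)
    also have "\<dots> \<le> \<rho> (t, w t) * (\<bar>t\<bar> + norm (w t))"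
      using norm_Pair_le[of t "w t"] by (intro mult_left_mono) (auto simp: \<rho>_def)
    finally show ?thesis .
  qed
  have "((\<lambda>t. L ((1/t) *\<^sub>R w t) + a) \<longlongrightarrow> 0) (at 0)"
  proof (rule Lim_null_comparison)
    have "\<forall>\<^sub>F t in at 0. t \<noteq> 0 \<and> \<rho> (t, w t) < c0/2"
      using order_tendstoD(2)[OF \<rho>w, of "c0/2"] c0 by (auto simp: eventually_at_filter elim: eventually_mono)
    then show "\<forall>\<^sub>F t in at 0. norm (L ((1/t) *\<^sub>R w t) + a) \<le> \<rho> (t, w t) * (2 + 2 * norm a / c0)"
    proof (rule eventually_mono, elim conjE)
      fix t :: real assume t: "t \<noteq> 0" and small: "\<rho> (t, w t) < c0/2"
      have "c0 * norm (w t) \<le> norm (\<Phi>' (t, w t)) + \<bar>t\<bar> * norm a"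
        using below[of "w t"] norm_triangle_ineq4[of "\<Phi>' (t, w t)" "t *\<^sub>R a"]
        by (simp add: split L_def)
      then have "norm (\<Phi>' (t, w t)) \<le> \<rho> (t, w t) * \<bar>t\<bar> * (2 + 2 * norm a / c0)"
        using t small remainder[of t] c0
        by (intro absorb_small_coefficient[where n="norm (w t)"]) (auto simp: \<rho>_def)
      moreover have "L ((1/t) *\<^sub>R w t) + a = (1/t) *\<^sub>R \<Phi>' (t, w t)"
        using t by (simp add: split linear_scale[OF lin] algebra_simps)
      ultimately show "norm (L ((1/t) *\<^sub>R w t) + a) \<le> \<rho> (t, w t) * (2 + 2 * norm a / c0)"
        using t by (simp add: field_simps)
    qed
    show "((\<lambda>t. \<rho> (t, w t) * (2 + 2 * norm a / c0)) \<longlongrightarrow> 0) (at 0)"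
      using tendsto_mult_left_zero[OF \<rho>w] by simp
  qed
  then have "((\<lambda>t. L ((1/t) *\<^sub>R (x t - x 0))) \<longlongrightarrow> - a) (at 0)"
    using tendsto_diff[OF _ tendsto_const[of a]] by (fastforce simp: w_def)
  then show ?thesis
    using differentiable_at_0_of_bounded_below[OF lin c0 below[folded L_def] closed[folded L_def]]
    by blast
qed

section \<open>Strongly continuous groups\<close>

context
  fixes T :: "real \<Rightarrow> 'a::banach \<Rightarrow> 'a"
  assumes T: "sc_group T"
begin

lemma sc_group_bounded_linear: "bounded_linear (T s)"
  using T by (simp add: sc_group_def)

lemma sc_group_0: "T 0 u = u"
  using T by (simp add: sc_group_def)

lemma sc_group_add: "T (s + t) u = T s (T t u)"
  using T by (simp add: sc_group_def)

lemma sc_group_tendsto: "((\<lambda>s. T s u) \<longlongrightarrow> T s0 u) (at s0)"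
  using T unfolding sc_group_def continuous_on_def by auto

lemma sc_group_has_vector_derivative:
  assumes "u \<in> gen_dom T"
  shows "((\<lambda>s. T s u) has_vector_derivative T s (gen T u)) (at s)"
proof -
  have "((\<lambda>h. T h u) has_vector_derivative gen T u) (at 0)"
    using assms unfolding gen_dom_def gen_def by (simp add: vector_derivative_works)
  then have "((\<lambda>h. T s (T h u)) has_vector_derivative T s (gen T u)) (at 0)"
    by (rule bounded_linear.has_vector_derivative[OF sc_group_bounded_linear])
  then show ?thesis
    unfolding has_vector_derivative_iff_difference_quotient by (simp add: sc_group_add sc_group_0)
qed

end

section \<open>Regularity of a zero of \<open>\<Phi>\<close> along its orbit\<close>

locale vanishing_orbit =
  fixes T :: "real \<Rightarrow> 'a::banach \<Rightarrow> 'a" and \<Phi> :: "real \<times> 'a \<Rightarrow> 'b::real_normed_vector"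
    and D :: "nat \<Rightarrow> real \<times> 'a \<Rightarrow> (real \<times> 'a) list \<Rightarrow> 'b" and u0 :: 'a and c0 :: real
  assumes sc_group: "sc_group T" and higher_derivs: "higher_derivs \<Phi> D"
    and vanishing: "\<And>s. \<Phi> (s, T s u0) = 0"
    and c0_pos: "c0 > 0" and bounded_below: "\<And>v. c0 * norm v \<le> norm (D 1 (0, u0) [(0, v)])"
    and closed_range: "closed (range (\<lambda>v. D 1 (0, u0) [(0, v)]))"
begin

definition orbit :: "nat \<Rightarrow> real \<Rightarrow> 'a" where
  "orbit j s = T s ((gen T ^^ j) u0)"

definition curve :: "real \<Rightarrow> real \<times> 'a" where
  "curve s = (s, T s u0)"

text \<open>In \<open>chain_term ls\<close>, \<open>None\<close> stands for the direction \<open>(1, 0)\<close> and \<open>Some j\<close> for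
  \<open>(0, T s (A^j u0))\<close>; \<open>chain_term_derivs ls\<close> lists the terms of its derivative given by the
  chain and product rules.\<close>

fun slot :: "nat option \<Rightarrow> real \<Rightarrow> real \<times> 'a" where
  "slot None s = (1, 0)"
| "slot (Some j) s = (0, orbit j s)"

definition chain_term :: "nat option list \<Rightarrow> real \<Rightarrow> 'b" where
  "chain_term ls s = D (length ls) (curve s) (map (\<lambda>q. slot q s) ls)"

definition raise_order :: "nat option list \<Rightarrow> nat \<Rightarrow> nat option list" where
  "raise_order ls i = ls[i := map_option Suc (ls ! i)]"

definition chain_term_derivs :: "nat option list \<Rightarrow> nat option list list" where
  "chain_term_derivs ls = (None # ls) # (Some 1 # ls) #
     map (raise_order ls) (filter (\<lambda>i. ls ! i \<noteq> None) [0..<length ls])"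

definition orders_below :: "nat \<Rightarrow> nat option list \<Rightarrow> bool" where
  "orders_below n ls \<longleftrightarrow> (\<forall>j. Some j \<in> set ls \<longrightarrow> j < n)"

lemma D_multilinear: "bounded_multilinear m (D m x)"
  by (rule higher_derivs_multilinear[OF higher_derivs])

lemma orbit_has_vector_derivative:
  "u0 \<in> Udom T k \<Longrightarrow> j < k \<Longrightarrow> (orbit j has_vector_derivative orbit (Suc j) s) (at s)"
  using sc_group_has_vector_derivative[OF sc_group, of "(gen T ^^ j) u0" s]
  by (simp add: Udom_def orbit_def[abs_def])

lemma orbit_tendsto: "((\<lambda>t. orbit j (s + t)) \<longlongrightarrow> orbit j s) (at 0)"
  unfolding orbit_def by (rule LIM_offset_zero) (rule sc_group_tendsto[OF sc_group])

lemma curve_0: "curve 0 = (0, u0)"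
  by (simp add: curve_def sc_group_0[OF sc_group])

lemma curve_has_vector_derivative:
  "u0 \<in> Udom T k \<Longrightarrow> 0 < k \<Longrightarrow> (curve has_vector_derivative (1, orbit 1 s)) (at s)"
  using orbit_has_vector_derivative[of k 0 s]
  by (auto simp: curve_def[abs_def] orbit_def[abs_def] sc_group_0[OF sc_group]
      intro!: has_vector_derivative_Pair)

lemma slot_has_vector_derivative:
  assumes "u0 \<in> Udom T k" "\<And>j. q = Some j \<Longrightarrow> j < k"
  shows "(slot q has_vector_derivative (case q of None \<Rightarrow> 0 | Some j \<Rightarrow> slot (Some (Suc j)) s)) (at s)"
  using orbit_has_vector_derivative[OF assms(1), of _ s] assms(2)
  by (cases q) (auto simp: slot.simps[abs_def] intro!: has_vector_derivative_Pair)

lemma chain_term_Nil: "chain_term [] s = 0"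
  using vanishing higher_derivs_0[OF higher_derivs] by (simp add: chain_term_def curve_def)

lemma chain_term_has_vector_derivative:
  assumes u0: "u0 \<in> Udom T k" and k: "0 < k" and ls: "orders_below k ls"
  shows "(chain_term ls has_vector_derivative
      sum_list (map (\<lambda>l. chain_term l s) (chain_term_derivs ls))) (at s)"
proof -
  define m where "m = length ls"
  define G where "G s = map (\<lambda>q. slot q s) ls" for s
  define G' where "G' i = (case ls ! i of None \<Rightarrow> 0 | Some j \<Rightarrow> slot (Some (Suc j)) s)" for i
  have lG: "length (G s) = m" for s by (simp add: G_def m_def)
  have G: "map (\<lambda>i. slot (ls ! i) s) [0..<m] = G s" for s
    unfolding G_def m_def by (rule nth_equalityI) simp_all
  have slots: "(slot (ls ! i) has_vector_derivative G' i) (at s)" if "i < m" for i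
    unfolding G'_def using that ls
    by (intro slot_has_vector_derivative[OF u0]) (auto simp: orders_below_def m_def dest: nth_mem)
  have "(\<lambda>s. D m (curve s) (G s)) = chain_term ls"
    by (auto simp: chain_term_def G_def m_def)
  moreover have "((\<lambda>s. D m (curve s) (G s)) has_vector_derivative
      D (Suc m) (curve s) ((1, orbit 1 s) # G s) + (\<Sum>i<m. D m (curve s) ((G s)[i := G' i]))) (at s)"
    using higher_derivs_chain_rule[OF higher_derivs curve_has_vector_derivative[OF u0 k],
        of m "\<lambda>i. slot (ls ! i)" G', OF slots]
    by (simp only: G)
  moreover have "D (Suc m) (curve s) ((1, orbit 1 s) # G s) =
      chain_term (None # ls) s + chain_term (Some 1 # ls) s"
    using bounded_multilinear_update_add[OF D_multilinear,
        where hs="(1, 0) # G s" and i=0 and x="(1, 0)" and y="(0, orbit 1 s)"]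
    by (simp add: chain_term_def G_def m_def)
  moreover have "(\<Sum>i<m. D m (curve s) ((G s)[i := G' i])) =
      sum_list (map (\<lambda>l. chain_term l s) (map (raise_order ls) (filter (\<lambda>i. ls ! i \<noteq> None) [0..<m])))"
  proof -
    have "D m (curve s) ((G s)[i := G' i]) = (if ls ! i \<noteq> None then chain_term (raise_order ls i) s else 0)"
      if i: "i < m" for i
    proof (cases "ls ! i")
      case None
      then show ?thesis using bounded_multilinear_update_0[OF D_multilinear lG i] by (simp add: G'_def)
    next
      case (Some j)
      then have "(G s)[i := G' i] = map (\<lambda>q. slot q s) (raise_order ls i)"
        by (simp add: G_def G'_def raise_order_def map_update)
      then show ?thesis using Some by (simp add: chain_term_def raise_order_def m_def)
    qed
    then show ?thesis
      by (simp add: sum_list_map_filter' sum_list_map_upt o_def)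
  qed
  ultimately show ?thesis by (simp add: chain_term_derivs_def m_def add.assoc)
qed

lemma orders_below_chain_term_derivs:
  assumes ls: "orders_below n ls" and n: "1 \<le> n" and l: "l \<in> set (chain_term_derivs ls)"
  shows "orders_below (Suc n) l"
proof -
  consider "l = None # ls" | "l = Some 1 # ls" | i where "i < length ls" "l = raise_order ls i"
    using l by (auto simp: chain_term_derivs_def)
  then show ?thesis
  proof cases
    case 3
    then have sub: "set l \<subseteq> insert (map_option Suc (ls ! i)) (set ls)"
      by (simp add: raise_order_def set_update_subset_insert)
    have below: "\<forall>j. ls ! i = Some j \<longrightarrow> j < n"
      using ls 3(1) by (auto simp: orders_below_def dest: nth_mem)
    show ?thesis unfolding orders_below_def
    proof (intro allI impI)
      fix j assume "Some j \<in> set l"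
      then have "map_option Suc (ls ! i) = Some j \<or> Some j \<in> set ls" using sub by (metis insert_iff subsetD)
      then show "j < Suc n" using ls below by (auto simp: orders_below_def map_option_eq_Some)
    qed
  qed (use ls n in \<open>auto simp: orders_below_def\<close>)
qed

lemma orders_below_mono: "orders_below n l \<Longrightarrow> n \<le> k \<Longrightarrow> orders_below k l"
  by (auto simp: orders_below_def)

text \<open>Differentiating \<open>\<Phi> (curve s) = 0\<close> \<open>n\<close> times isolates the highest order term
  \<open>D 1 (curve s) [(0, T s (A^n u0))]\<close>; every other term only involves orders below \<open>n\<close>.\<close>

lemma chain_term_identity:
  assumes u0: "u0 \<in> Udom T k" and n: "1 \<le> n" "n \<le> k"
  shows "\<exists>Q. (\<forall>l\<in>set Q. orders_below n l) \<and>
    (\<forall>s. chain_term [Some n] s + sum_list (map (\<lambda>l. chain_term l s) Q) = 0)"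
  using n
proof (induction n rule: nat_induct_at_least)
  case base
  then have "sum_list (map (\<lambda>l. chain_term l s) (chain_term_derivs [])) = 0" for s
    using has_vector_derivative_zero_unique[OF chain_term_has_vector_derivative[OF u0, of "[]" s]]
      chain_term_Nil by (auto simp: orders_below_def)
  then show ?case
    by (intro exI[of _ "[[None]]"]) (auto simp: chain_term_derivs_def orders_below_def add.commute)
next
  case (Suc n)
  then obtain Q where Q: "\<forall>l\<in>set Q. orders_below n l"
    and eq: "\<And>s. chain_term [Some n] s + sum_list (map (\<lambda>l. chain_term l s) Q) = 0"
    by auto
  have k: "0 < k" "n < k" using Suc by auto
  define Q' where "Q' = [None, Some n] # [Some 1, Some n] # concat (map chain_term_derivs Q)"
  have derivs: "chain_term_derivs [Some n] = [[None, Some n], [Some 1, Some n], [Some (Suc n)]]"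
    by (simp add: chain_term_derivs_def raise_order_def)
  have "((\<lambda>s. chain_term [Some n] s + sum_list (map (\<lambda>l. chain_term l s) Q)) has_vector_derivative
      chain_term [Some (Suc n)] s + sum_list (map (\<lambda>l. chain_term l s) Q')) (at s)" for s
  proof -
    have "(chain_term [Some n] has_vector_derivative
        sum_list (map (\<lambda>l. chain_term l s) (chain_term_derivs [Some n]))) (at s)"
      using k by (intro chain_term_has_vector_derivative[OF u0]) (auto simp: orders_below_def)
    moreover have "((\<lambda>s. sum_list (map (\<lambda>l. chain_term l s) Q)) has_vector_derivative
        sum_list (map (\<lambda>l. sum_list (map (\<lambda>l'. chain_term l' s) (chain_term_derivs l))) Q)) (at s)"
      using Q k orders_below_mono
      by (intro has_vector_derivative_sum_list chain_term_has_vector_derivative[OF u0]) auto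
    ultimately show ?thesis
      using has_vector_derivative_add
      by (fastforce simp: derivs Q'_def map_concat sum_list_concat o_def algebra_simps)
  qed
  then have "chain_term [Some (Suc n)] s + sum_list (map (\<lambda>l. chain_term l s) Q') = 0" for s
    using has_vector_derivative_zero_unique eq by blast
  moreover have "\<forall>l\<in>set Q'. orders_below (Suc n) l"
    using Q Suc.hyps orders_below_chain_term_derivs by (auto simp: Q'_def orders_below_def)
  ultimately show ?case by blast
qed

lemma u_derivative_linear: "linear (\<lambda>v. D 1 (0, u0) [(0, v)])"
proof -
  have "bounded_linear (\<lambda>h. D 1 (0, u0) [h])"
    using higher_derivs_has_derivative[OF higher_derivs] by (rule has_derivative_bounded_linear)
  from bounded_linear_compose[OF this bounded_linear_Pair[OF bounded_linear_zero bounded_linear_ident]]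
  show ?thesis by (rule bounded_linear.linear)
qed

lemma u0_in_gen_dom: "u0 \<in> gen_dom T"
proof -
  have "(\<lambda>t. T t u0) differentiable (at 0)"
  proof (rule differentiable_at_0_of_level_curve)
    show "(\<Phi> has_derivative (\<lambda>h. D 1 (0, u0) [h])) (at (0, T 0 u0))"
      using higher_derivs_has_derivative[OF higher_derivs] by (simp add: sc_group_0[OF sc_group])
    show "((\<lambda>t. T t u0) \<longlongrightarrow> T 0 u0) (at 0)" by (rule sc_group_tendsto[OF sc_group])
    show "\<Phi> (t, T t u0) = \<Phi> (0, T 0 u0)" for t by (simp add: vanishing)
  qed (use c0_pos bounded_below closed_range in auto)
  then show ?thesis by (simp add: gen_dom_def)
qed

lemma chain_term_top_order_differentiable:
  assumes u0: "u0 \<in> Udom T k" and k: "0 < k"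
  shows "chain_term [Some k] differentiable (at s)"
proof -
  obtain Q where Q: "\<forall>l\<in>set Q. orders_below k l"
    and eq: "\<And>s. chain_term [Some k] s + sum_list (map (\<lambda>l. chain_term l s) Q) = 0"
    using chain_term_identity[OF u0 _ order_refl] k by auto
  have "((\<lambda>s. - sum_list (map (\<lambda>l. chain_term l s) Q)) has_vector_derivative
      - sum_list (map (\<lambda>l. sum_list (map (\<lambda>l'. chain_term l' s) (chain_term_derivs l))) Q)) (at s)"
    using Q by (intro has_vector_derivative_minus has_vector_derivative_sum_list
        chain_term_has_vector_derivative[OF u0 k]) auto
  moreover have "(\<lambda>s. - sum_list (map (\<lambda>l. chain_term l s) Q)) = chain_term [Some k]"
    using eq by (intro ext) (metis eq_neg_iff_add_eq_0)
  ultimately show ?thesis by (metis differentiableI_vector)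
qed

text \<open>With \<open>L = D 1 (0, u0) [(0, \<cdot>)]\<close>, the difference quotient of \<open>L (T t (A^k u0))\<close> is that of the
  differentiable function \<open>chain_term [Some k]\<close>, corrected by the change of base point from
  \<open>curve t\<close> to \<open>curve 0\<close>, which converges by \<open>tendsto_higher_derivs_difference_quotient\<close>.\<close>

lemma gen_power_in_gen_dom:
  assumes u0: "u0 \<in> Udom T k" and k: "0 < k"
  shows "(gen T ^^ k) u0 \<in> gen_dom T"
proof -
  define L where "L v = D 1 (0, u0) [(0, v)]" for v
  define y where "y = chain_term [Some k]"
  have y_eq: "y s = D 1 (curve s) [(0, orbit k s)]" for s
    by (simp add: y_def chain_term_def)
  obtain y' where "(y has_vector_derivative y') (at 0)"
    using chain_term_top_order_differentiable[OF u0 k] vector_derivative_works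
    unfolding y_def by blast
  then have y: "((\<lambda>t. (1/t) *\<^sub>R (y t - y 0)) \<longlongrightarrow> y') (at 0)"
    by (simp add: has_vector_derivative_iff_difference_quotient)
  have "((\<lambda>t. (1/t) *\<^sub>R (D 1 (curve (0 + t)) (map (\<lambda>i. (0, orbit k t)) [0..<1]) -
      D 1 (curve 0) (map (\<lambda>i. (0, orbit k t)) [0..<1]))) \<longlongrightarrow>
      D (Suc 1) (curve 0) ((1, orbit 1 0) # map (\<lambda>i. (0, orbit k 0)) [0..<1])) (at 0)"
    by (rule tendsto_higher_derivs_difference_quotient[OF higher_derivs
          curve_has_vector_derivative[OF u0 k]])
      (use orbit_tendsto[of k 0] in \<open>auto intro!: tendsto_Pair\<close>)
  then have base_point: "((\<lambda>t. (1/t) *\<^sub>R (D 1 (curve t) [(0, orbit k t)] -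
      D 1 (curve 0) [(0, orbit k t)])) \<longlongrightarrow> D 2 (curve 0) [(1, orbit 1 0), (0, orbit k 0)]) (at 0)"
    by (simp add: numeral_2_eq_2)
  have quotient: "L ((1/t) *\<^sub>R (orbit k t - orbit k 0)) = (1/t) *\<^sub>R (y t - y 0) -
      (1/t) *\<^sub>R (D 1 (curve t) [(0, orbit k t)] - D 1 (curve 0) [(0, orbit k t)])" for t
  proof -
    have "L ((1/t) *\<^sub>R (orbit k t - orbit k 0)) = (1/t) *\<^sub>R (L (orbit k t) - L (orbit k 0))"
      using u_derivative_linear[folded L_def] by (simp add: linear_scale linear_diff)
    then show ?thesis by (simp add: y_eq L_def curve_0 algebra_simps)
  qed
  have "((\<lambda>t. L ((1/t) *\<^sub>R (orbit k t - orbit k 0))) \<longlongrightarrow>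
      y' - D 2 (curve 0) [(1, orbit 1 0), (0, orbit k 0)]) (at 0)"
    unfolding quotient by (rule tendsto_diff[OF y base_point])
  then have "orbit k differentiable (at 0)"
    by (rule differentiable_at_0_of_bounded_below[OF u_derivative_linear[folded L_def] c0_pos
          bounded_below[folded L_def] closed_range[folded L_def]])
  then show ?thesis by (simp add: gen_dom_def orbit_def[abs_def])
qed

lemma u0_in_Udom: "u0 \<in> Udom T l"
proof (induction l)
  case (Suc l)
  have "(gen T ^^ l) u0 \<in> gen_dom T"
    using u0_in_gen_dom gen_power_in_gen_dom[OF Suc.IH] by (cases l) auto
  with Suc.IH show ?case by (auto simp: Udom_def less_Suc_eq)
qed (simp add: Udom_def)

end

theorem lemma2p10:
  fixes T :: "real \<Rightarrow> 'a::banach \<Rightarrow> 'a"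
    and F :: "real \<Rightarrow> 'a \<Rightarrow> 'a"
    and \<epsilon>0 :: real and u0 :: 'a
    and DF :: "real \<Rightarrow> nat \<Rightarrow> real \<times> 'a \<Rightarrow> (real \<times> 'a) list \<Rightarrow> 'a"
    and Dlam :: "nat \<Rightarrow> nat \<Rightarrow> real \<Rightarrow> 'a \<Rightarrow> 'a list \<Rightarrow> 'a"
  assumes T: "sc_group T"
    and eps: "\<epsilon>0 > 0"
    and F0: "F 0 u0 = 0"
    and A1: "\<forall>lam\<in>{-\<epsilon>0..\<epsilon>0}. higher_derivs (\<lambda>(s, u). T s (F lam (T (-s) u))) (DF lam)"
    and A2: "\<forall>l k u us. u \<in> Udom T l \<longrightarrow> set us \<subseteq> Udom T l \<longrightarrow>
               (\<forall>lam\<in>{-\<epsilon>0..\<epsilon>0}. Dlam 0 k lam u us = pderiv_su (DF lam) k 0 u us) \<and>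
               Cl_with l {-\<epsilon>0..\<epsilon>0} (\<lambda>m lam. Dlam m k lam u us)"
    and A3: "\<forall>j k l. \<exists>c>0. \<forall>lam\<in>{-\<epsilon>0..\<epsilon>0}. \<forall>u us.
               length us = j \<longrightarrow> u \<in> Udom T l \<longrightarrow> set us \<subseteq> Udom T l \<longrightarrow>
               u - u0 \<in> Udom T l \<longrightarrow> lnorm T l (u - u0) \<le> 1 \<longrightarrow>
               norm (Dlam l k lam u us) \<le> c * prod_list (map (lnorm T l) us)"
    and A4: "\<exists>c0>0. \<forall>lam\<in>{-\<epsilon>0..\<epsilon>0}.
               fredholm_index_zero (\<lambda>v. pderiv_su (DF lam) 0 0 u0 [v]) \<and>
               (\<forall>v. norm (pderiv_su (DF lam) 0 0 u0 [v]) \<ge> c0 * norm v)"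
  shows "\<forall>l. u0 \<in> Udom T l"
proof -
  \<comment> \<open>Only (A1) and (A4) at \<open>lam = 0\<close> are used.\<close>
  have lam0: "0 \<in> {-\<epsilon>0..\<epsilon>0}" using eps by simp
  obtain c0 where c0: "c0 > 0"
    and fredholm: "fredholm_index_zero (\<lambda>v. DF 0 1 (0, u0) [(0, v)])"
    and below: "\<And>v. c0 * norm v \<le> norm (DF 0 1 (0, u0) [(0, v)])"
    using A4 lam0 by (auto simp: pderiv_su_def)
  have "T s (F 0 (T (-s) (T s u0))) = 0" for s
    using sc_group_add[OF T, of "-s" s] linear_0[OF bounded_linear.linear[OF sc_group_bounded_linear[OF T]]]
    by (simp add: sc_group_0[OF T] F0)
  then interpret vanishing_orbit T "\<lambda>(s, u). T s (F 0 (T (-s) u))" "DF 0" u0 c0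
    using T A1 lam0 c0 below fredholm by unfold_locales (auto simp: fredholm_index_zero_def)
  show ?thesis using u0_in_Udom by blast
qed

end
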